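(* Let $n\ge 1$ and let $B\in\mathbb{R}^{n\times n}$ satisfy $B_{ij}\ge 0$ and $\sum_{j=1}^n B_{ij}\le 1$ for all $i,j\in\{1,\dots,n\}$. Let $\zeta=\frac{1}{n^2}\sum_{i=1}^n\sum_{j=1}^n \mathbb{1}(B_{ij}>0)$ and define the average repetition probability $R=\sum_{k=1}^\infty \operatorname{tr}\!\left(\frac{B^{2k}}{\zeta^k n^k}\right)$. If $\zeta n>\rho(B^2)$, then $$R=\operatorname{tr}\!\left(B^2(\zeta n I-B^2)^{-1}\right)\le \frac{\|B^2\|_*}{\sigma_n(\zeta n I-B^2)}.$$
   Context: $B$ is the sub-transition matrix of a Markov generation model over a vocabulary of $n$ words (the full transition matrix on $n+1$ states, the last being an absorbing end-of-sentence state, is $A=\begin{bmatrix}B & b\\ 0 & 1\end{bmatrix}$ with $b_i=1-\sum_{j}B_{ij}$). $\mathbb{1}(\cdot)$ is the indicator function, $\rho(\cdot)$ denotes the spectral radius, $\|\cdot\|_*$ the nuclear norm (sum of singular values), $\sigma_n(\cdot)$ the smallest singular value of an $n\times n$ matrix, and $I$ the $n\times n$ identity matrix. *)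

theory Defs
  imports "Jordan_Normal_Form.Spectral_Radius" "Jordan_Normal_Form.Gauss_Jordan_Elimination"
          "HOL-Computational_Algebra.Polynomial"
begin

definition mtrace :: "'a :: comm_ring_1 mat \<Rightarrow> 'a" where
  "mtrace A = (\<Sum>i<dim_row A. A $$ (i, i))"

definition minv :: "real mat \<Rightarrow> real mat" where
  "minv A = the (mat_inverse A)"

definition singular_values :: "real mat \<Rightarrow> real multiset" where
  "singular_values A = image_mset sqrt (proots (char_poly (transpose_mat A * A)))"

definition nuclear_norm :: "real mat \<Rightarrow> real" where
  "nuclear_norm A = sum_mset (singular_values A)"

definition sigma_min :: "real mat \<Rightarrow> real" where
  "sigma_min A = Min (set_mset (singular_values A))"

definition rspec_radius :: "real mat \<Rightarrow> real" where
  "rspec_radius A = spectral_radius (map_mat complex_of_real A)"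

end

theory Submission
  imports Defs "HOL-Analysis.L2_Norm"
begin

(* Put c = \<zeta> n and X = B\<^sup>2. The terms of R are tr (X\<^sup>k) / c\<^sup>k for k \<ge> 1, and since \<rho>(X) < c the
   powers (X/c)\<^sup>k decay geometrically, so with W = (c I - X)\<^sup>-\<^sup>1 the partial sums telescope to
   tr (W X) = tr (X W). For the bound, expand tr (W X) = \<Sum>\<^sub>i \<langle>v\<^sub>i, W X v\<^sub>i\<rangle> in an orthonormal
   eigenbasis v\<^sub>i of X\<^sup>T X: by Cauchy-Schwarz each term is at most
   \<parallel>W\<parallel> \<parallel>X v\<^sub>i\<parallel> = \<sigma>\<^sub>i(X) / \<sigma>\<^sub>n(c I - X).
   The eigenbasis comes from the spectral theorem for Hermitian matrices, proved by extending an
   orthonormal list of eigenvectors one vector at a time. *)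

abbreviation cmat :: "real mat \<Rightarrow> complex mat" where
  "cmat X \<equiv> map_mat complex_of_real X"

lemma scalar_prod_sum_lessThan: "v \<bullet> w = (\<Sum>i<dim_vec w. v $ i * w $ i)"
  unfolding scalar_prod_def by (simp add: atLeast0LessThan)

lemma index_mult_mat_sum:
  "i < dim_row A \<Longrightarrow> j < dim_col B \<Longrightarrow> dim_col A = dim_row B \<Longrightarrow>
   (A * B) $$ (i, j) = (\<Sum>k<dim_row B. A $$ (i, k) * B $$ (k, j))"
  by (simp add: scalar_prod_sum_lessThan)

section \<open>Complex inner product and adjoint\<close>

definition cinner :: "complex vec \<Rightarrow> complex vec \<Rightarrow> complex" where
  "cinner u v = (\<Sum>a<dim_vec v. cnj (u $ a) * v $ a)"

definition cnorm :: "complex vec \<Rightarrow> real" where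
  "cnorm v = L2_set (\<lambda>a. cmod (v $ a)) {..<dim_vec v}"

lemma cnorm_nonneg: "cnorm v \<ge> 0"
  unfolding cnorm_def by simp

lemma of_real_cmod_square: "complex_of_real (cmod z ^ 2) = cnj z * z"
  by (metis complex_norm_square mult.commute)

lemma cinner_self: "cinner v v = complex_of_real (cnorm v ^ 2)"
proof -
  have "cnorm v ^ 2 = (\<Sum>a<dim_vec v. cmod (v $ a) ^ 2)"
    unfolding cnorm_def L2_set_def by (simp add: sum_nonneg)
  then show ?thesis
    unfolding cinner_def of_real_sum by (simp add: of_real_cmod_square del: of_real_power)
qed

lemma cnorm_eq_0_iff: "v \<in> carrier_vec n \<Longrightarrow> cnorm v = 0 \<longleftrightarrow> v = 0\<^sub>v n"
  unfolding cnorm_def by (auto simp: L2_set_eq_0_iff)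

lemma cinner_cauchy_schwarz:
  assumes "u \<in> carrier_vec n" "v \<in> carrier_vec n"
  shows "cmod (cinner u v) \<le> cnorm u * cnorm v"
proof -
  have "cmod (cinner u v) \<le> (\<Sum>a<n. cmod (cnj (u $ a) * v $ a))"
    unfolding cinner_def using assms by (simp add: norm_sum)
  also have "\<dots> = (\<Sum>a<n. \<bar>cmod (u $ a)\<bar> * \<bar>cmod (v $ a)\<bar>)"
    by (simp add: norm_mult)
  also have "\<dots> \<le> cnorm u * cnorm v"
    unfolding cnorm_def using assms L2_set_mult_ineq[of "\<lambda>a. cmod (u $ a)" "\<lambda>a. cmod (v $ a)" "{..<n}"] by simp
  finally show ?thesis .
qed

lemma cinner_commute: "u \<in> carrier_vec n \<Longrightarrow> v \<in> carrier_vec n \<Longrightarrow> cinner v u = cnj (cinner u v)"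
  unfolding cinner_def by (simp add: mult.commute)

lemma cinner_smult_right: "cinner u (c \<cdot>\<^sub>v v) = c * cinner u v"
  unfolding cinner_def by (simp add: sum_distrib_left mult.left_commute)

lemma cinner_smult_left:
  "u \<in> carrier_vec n \<Longrightarrow> v \<in> carrier_vec n \<Longrightarrow> cinner (c \<cdot>\<^sub>v u) v = cnj c * cinner u v"
  unfolding cinner_def by (simp add: sum_distrib_left mult.assoc)

lemma cinner_normalize:
  assumes u: "u \<in> carrier_vec n" "u \<noteq> 0\<^sub>v n"
  defines "w \<equiv> complex_of_real (1 / cnorm u) \<cdot>\<^sub>v u"
  shows "cinner w w = 1"
proof -
  have "cnorm u \<noteq> 0" using cnorm_eq_0_iff[OF u(1)] u(2) by simp
  have "cinner w w = cnj (complex_of_real (1 / cnorm u)) * (complex_of_real (1 / cnorm u) * cinner u u)"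
    unfolding w_def using u cinner_smult_left[of u n] cinner_smult_right by simp
  also have "\<dots> = 1"
    unfolding cinner_self using \<open>cnorm u \<noteq> 0\<close> by (simp add: power2_eq_square)
  finally show ?thesis .
qed

lemma mat_adjoint_index [simp]:
  fixes A :: "complex mat"
  shows "i < dim_col A \<Longrightarrow> j < dim_row A \<Longrightarrow> mat_adjoint A $$ (i, j) = cnj (A $$ (j, i))"
    and "dim_row (mat_adjoint A) = dim_col A" and "dim_col (mat_adjoint A) = dim_row A"
  by (simp_all add: mat_adjoint_def mat_of_rows_index)

lemma mat_adjoint_carrier [simp]:
  "(A :: complex mat) \<in> carrier_mat n m \<Longrightarrow> mat_adjoint A \<in> carrier_mat m n"
  unfolding carrier_mat_def by simp

lemma mat_adjoint_mult:
  fixes A B :: "complex mat"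
  assumes "A \<in> carrier_mat n m" "B \<in> carrier_mat m k"
  shows "mat_adjoint (A * B) = mat_adjoint B * mat_adjoint A"
proof (rule eq_matI)
  fix i j assume "i < dim_row (mat_adjoint B * mat_adjoint A)" "j < dim_col (mat_adjoint B * mat_adjoint A)"
  then show "mat_adjoint (A * B) $$ (i, j) = (mat_adjoint B * mat_adjoint A) $$ (i, j)"
    using assms by (simp add: index_mult_mat_sum mult.commute cnj_sum del: index_mult_mat(1))
qed (use assms in auto)

lemma mat_adjoint_of_real: "mat_adjoint (cmat X) = cmat (transpose_mat X)"
  by (rule eq_matI) simp_all

lemma cinner_mult_mat_vec:
  assumes A: "A \<in> carrier_mat n m" and u: "u \<in> carrier_vec n" and v: "v \<in> carrier_vec m"
  shows "cinner u (A *\<^sub>v v) = cinner (mat_adjoint A *\<^sub>v u) v"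
proof -
  have "cinner u (A *\<^sub>v v) = (\<Sum>a<n. \<Sum>b<m. cnj (u $ a) * A $$ (a, b) * v $ b)"
    unfolding cinner_def using A u v
    by (auto simp: scalar_prod_sum_lessThan sum_distrib_left mult.assoc intro!: sum.cong)
  also have "\<dots> = (\<Sum>b<m. \<Sum>a<n. cnj (u $ a) * A $$ (a, b) * v $ b)"
    by (rule sum.swap)
  also have "\<dots> = (\<Sum>b<m. cnj (\<Sum>a<n. cnj (A $$ (a, b)) * u $ a) * v $ b)"
    by (simp add: sum_distrib_right sum_distrib_left mult_ac)
  also have "\<dots> = cinner (mat_adjoint A *\<^sub>v u) v"
    unfolding cinner_def using A u v by (auto simp: scalar_prod_sum_lessThan intro!: sum.cong)
  finally show ?thesis .
qed

definition hermitian :: "complex mat \<Rightarrow> bool" where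
  "hermitian A \<longleftrightarrow> mat_adjoint A = A"

definition unitary :: "nat \<Rightarrow> complex mat \<Rightarrow> bool" where
  "unitary n V \<longleftrightarrow> V \<in> carrier_mat n n \<and> mat_adjoint V * V = 1\<^sub>m n \<and> V * mat_adjoint V = 1\<^sub>m n"

lemma hermitian_mult_mult:
  assumes "A \<in> carrier_mat n n" "P \<in> carrier_mat n n" "hermitian A" "hermitian P"
  shows "hermitian (P * A * P)"
  using assms unfolding hermitian_def
  by (simp add: mat_adjoint_mult[of _ n n _ n] assoc_mult_mat[of _ n n _ n _ n])

lemma mtrace_mult_comm:
  assumes "A \<in> carrier_mat n m" "B \<in> carrier_mat m n"
  shows "mtrace (A * B) = mtrace (B * A)"
proof -
  have "mtrace (A * B) = (\<Sum>i<n. \<Sum>k<m. A $$ (i, k) * B $$ (k, i))"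
    using assms unfolding mtrace_def by (auto simp: scalar_prod_sum_lessThan intro!: sum.cong)
  also have "\<dots> = (\<Sum>k<m. \<Sum>i<n. B $$ (k, i) * A $$ (i, k))"
    by (subst sum.swap) (simp add: mult.commute)
  also have "\<dots> = mtrace (B * A)"
    using assms unfolding mtrace_def by (auto simp: scalar_prod_sum_lessThan intro!: sum.cong)
  finally show ?thesis .
qed

lemma mtrace_minus: "A \<in> carrier_mat n n \<Longrightarrow> B \<in> carrier_mat n n \<Longrightarrow> mtrace (A - B) = mtrace A - mtrace B"
  unfolding mtrace_def by (simp add: sum_subtractf)

lemma mtrace_smult: "A \<in> carrier_mat n n \<Longrightarrow> mtrace (a \<cdot>\<^sub>m A) = a * mtrace A"
  unfolding mtrace_def by (simp add: sum_distrib_left)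

lemma mtrace_of_real: "A \<in> carrier_mat n n \<Longrightarrow> mtrace (cmat A) = complex_of_real (mtrace A)"
  unfolding mtrace_def of_real_sum by (intro sum.cong) auto

lemma mtrace_similar_mat_wit:
  assumes A: "A \<in> carrier_mat n n" and sim: "similar_mat_wit A B P Q"
  shows "mtrace A = mtrace B"
proof -
  note w = similar_mat_witD2[OF A sim]
  have "mtrace A = mtrace (Q * (P * B))"
    using w mtrace_mult_comm[of "P * B" n n Q] by auto
  also have "\<dots> = mtrace B"
    using w by (simp add: assoc_mult_mat[of Q n n P n B n, symmetric])
  finally show ?thesis .
qed

lemma mtrace_square_upper_triangular:
  assumes T: "T \<in> carrier_mat n n" and ut: "upper_triangular T"
  shows "mtrace (T * T) = (\<Sum>i<n. T $$ (i, i) ^ 2)"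
proof -
  have "mtrace (T * T) = (\<Sum>i<n. \<Sum>k<n. T $$ (i, k) * T $$ (k, i))"
    using T unfolding mtrace_def by (auto simp: scalar_prod_sum_lessThan intro!: sum.cong)
  also have "\<dots> = (\<Sum>i<n. \<Sum>k<n. if k = i then T $$ (i, i) ^ 2 else 0)"
  proof (intro sum.cong refl)
    fix i k assume "i \<in> {..<n}" "k \<in> {..<n}"
    then show "T $$ (i, k) * T $$ (k, i) = (if k = i then T $$ (i, i) ^ 2 else 0)"
      using ut T unfolding upper_triangular_def
      by (cases "k < i"; cases "i < k") (auto simp: power2_eq_square)
  qed
  finally show ?thesis by simp
qed

lemma mtrace_square_hermitian:
  assumes Z: "Z \<in> carrier_mat n n" and h: "hermitian Z"
  shows "mtrace (Z * Z) = complex_of_real (\<Sum>i<n. \<Sum>k<n. cmod (Z $$ (i, k)) ^ 2)"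
proof -
  have "mtrace (Z * Z) = (\<Sum>i<n. \<Sum>k<n. Z $$ (i, k) * Z $$ (k, i))"
    using Z unfolding mtrace_def by (auto simp: scalar_prod_sum_lessThan intro!: sum.cong)
  also have "\<dots> = (\<Sum>i<n. \<Sum>k<n. complex_of_real (cmod (Z $$ (i, k)) ^ 2))"
  proof (intro sum.cong refl)
    fix i k assume "i \<in> {..<n}" "k \<in> {..<n}"
    then have "Z $$ (k, i) = cnj (Z $$ (i, k))"
      using Z h mat_adjoint_index(1)[of k Z i] unfolding hermitian_def by auto
    then show "Z $$ (i, k) * Z $$ (k, i) = complex_of_real (cmod (Z $$ (i, k)) ^ 2)"
      by (simp add: of_real_cmod_square mult.commute del: of_real_power)
  qed
  finally show ?thesis by simp
qed

section \<open>Spectral theorem for Hermitian matrices\<close>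

lemma hermitian_nonzero_eigenvalue:
  assumes Z: "Z \<in> carrier_mat n n" and h: "hermitian Z" and nz: "Z \<noteq> 0\<^sub>m n n"
  shows "\<exists>\<mu>. \<mu> \<noteq> 0 \<and> eigenvalue Z \<mu>"
proof (rule ccontr)
  assume "\<not> ?thesis"
  then have ev0: "\<And>\<mu>. eigenvalue Z \<mu> \<Longrightarrow> \<mu> = 0" by auto
  obtain es where cp: "char_poly Z = (\<Prod>e\<leftarrow>es. [:- e, 1:])"
    using char_poly_factorized[OF Z] by auto
  obtain T P Q where sd: "schur_decomposition Z es = (T, P, Q)"
    by (cases "schur_decomposition Z es") auto
  from schur_decomposition[OF Z cp sd] have sim: "similar_mat_wit Z T P Q"
    and ut: "upper_triangular T" and dg: "diag_mat T = es" by auto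
  have T: "T \<in> carrier_mat n n" using similar_mat_witD2[OF Z sim] by auto
  have diag0: "T $$ (i, i) = 0" if "i < n" for i
  proof -
    have "T $$ (i, i) \<in> set es" using dg T that unfolding diag_mat_def by auto
    then have "poly (char_poly Z) (T $$ (i, i)) = 0" unfolding cp by (rule linear_poly_root)
    then show ?thesis using ev0 eigenvalue_root_char_poly[OF Z] by blast
  qed
  have "similar_mat_wit (Z * Z) (T * T) P Q"
    using similar_mat_wit_pow[OF sim, of 2] Z T by (simp add: numeral_2_eq_2)
  then have "mtrace (Z * Z) = mtrace (T * T)"
    by (rule mtrace_similar_mat_wit[OF mult_carrier_mat[OF Z Z]])
  also have "\<dots> = 0" using mtrace_square_upper_triangular[OF T ut] diag0 by simp
  finally have "(\<Sum>i<n. \<Sum>k<n. cmod (Z $$ (i, k)) ^ 2) = 0"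
    using mtrace_square_hermitian[OF Z h] of_real_eq_0_iff by metis
  then have "\<forall>i<n. \<forall>k<n. Z $$ (i, k) = 0"
    by (simp add: sum_nonneg_eq_0_iff sum_nonneg)
  then have "Z = 0\<^sub>m n n" using Z by (intro eq_matI) auto
  with nz show False ..
qed

definition orthonormal :: "nat \<Rightarrow> complex vec list \<Rightarrow> bool" where
  "orthonormal n vs \<longleftrightarrow> set vs \<subseteq> carrier_vec n \<and>
     (\<forall>i<length vs. \<forall>j<length vs. cinner (vs ! i) (vs ! j) = (if i = j then 1 else 0))"

lemma orthonormal_carrier: "orthonormal n vs \<Longrightarrow> j < length vs \<Longrightarrow> vs ! j \<in> carrier_vec n"
  unfolding orthonormal_def by auto

lemma orthonormal_dim: "orthonormal n vs \<Longrightarrow> j < length vs \<Longrightarrow> dim_vec (vs ! j) = n"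
  by (metis carrier_vecD orthonormal_carrier)

lemma orthonormal_snoc:
  assumes o: "orthonormal n vs" and u: "u \<in> carrier_vec n" and u1: "cinner u u = 1"
    and perp: "\<forall>j<length vs. cinner (vs ! j) u = 0"
  shows "orthonormal n (vs @ [u])"
  unfolding orthonormal_def
proof (intro conjI allI impI)
  show "set (vs @ [u]) \<subseteq> carrier_vec n" using o u unfolding orthonormal_def by auto
  have perp': "cinner u (vs ! j) = 0" if "j < length vs" for j
    using cinner_commute[OF orthonormal_carrier[OF o that] u] perp that by simp
  fix i j assume "i < length (vs @ [u])" "j < length (vs @ [u])"
  then consider "i < length vs" "j < length vs" | "i < length vs" "j = length vs"
    | "i = length vs" "j < length vs" | "i = length vs" "j = length vs"
    by fastforce
  then show "cinner ((vs @ [u]) ! i) ((vs @ [u]) ! j) = (if i = j then 1 else 0)"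
    by cases (use o u1 perp perp' in \<open>auto simp: nth_append orthonormal_def\<close>)
qed

definition orth_proj_mat :: "nat \<Rightarrow> complex vec list \<Rightarrow> complex mat" where
  "orth_proj_mat n vs =
     mat n n (\<lambda>(a, b). (if a = b then 1 else 0) - (\<Sum>i<length vs. vs ! i $ a * cnj (vs ! i $ b)))"

lemma orth_proj_mat_carrier [simp]: "orth_proj_mat n vs \<in> carrier_mat n n"
  unfolding orth_proj_mat_def by simp

lemma orth_proj_mat_mult_vec:
  assumes w: "w \<in> carrier_vec n"
  shows "orth_proj_mat n vs *\<^sub>v w = vec n (\<lambda>a. w $ a - (\<Sum>i<length vs. cinner (vs ! i) w * vs ! i $ a))"
proof (rule eq_vecI)
  fix a assume "a < dim_vec (vec n (\<lambda>a. w $ a - (\<Sum>i<length vs. cinner (vs ! i) w * vs ! i $ a)))"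
  then have a: "a < n" by simp
  have "(orth_proj_mat n vs *\<^sub>v w) $ a =
      (\<Sum>b<n. (if a = b then 1 else 0) * w $ b) - (\<Sum>b<n. \<Sum>i<length vs. vs ! i $ a * cnj (vs ! i $ b) * w $ b)"
    using a w unfolding orth_proj_mat_def
    by (simp add: scalar_prod_sum_lessThan left_diff_distrib sum_subtractf sum_distrib_right)
  also have "(\<Sum>b<n. (if a = b then 1 else 0) * w $ b) = w $ a"
    using a by (simp add: if_distrib[of "\<lambda>x. x * _"] cong: if_cong)
  also have "(\<Sum>b<n. \<Sum>i<length vs. vs ! i $ a * cnj (vs ! i $ b) * w $ b) =
      (\<Sum>i<length vs. cinner (vs ! i) w * vs ! i $ a)"
    by (subst sum.swap)
      (use w in \<open>auto simp: cinner_def sum_distrib_left sum_distrib_right mult_ac intro!: sum.cong\<close>)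
  finally show "(orth_proj_mat n vs *\<^sub>v w) $ a = vec n (\<lambda>a. w $ a - (\<Sum>i<length vs. cinner (vs ! i) w * vs ! i $ a)) $ a"
    using a by simp
qed (simp add: orth_proj_mat_def)

lemma cinner_orth_proj_mat:
  assumes w: "w \<in> carrier_vec n" and o: "orthonormal n vs" and j: "j < length vs"
  shows "cinner (vs ! j) (orth_proj_mat n vs *\<^sub>v w) = 0"
proof -
  let ?c = "\<lambda>i. cinner (vs ! i) w"
  have vj: "vs ! j \<in> carrier_vec n" using orthonormal_carrier[OF o j] .
  have "cinner (vs ! j) (orth_proj_mat n vs *\<^sub>v w) =
      ?c j - (\<Sum>a<n. \<Sum>i<length vs. ?c i * (cnj (vs ! j $ a) * vs ! i $ a))"
    unfolding orth_proj_mat_mult_vec[OF w] using w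
    by (simp add: cinner_def right_diff_distrib sum_subtractf sum_distrib_left mult.commute mult.left_commute)
  also have "(\<Sum>a<n. \<Sum>i<length vs. ?c i * (cnj (vs ! j $ a) * vs ! i $ a)) =
      (\<Sum>i<length vs. ?c i * cinner (vs ! j) (vs ! i))"
    by (subst sum.swap)
      (use o in \<open>auto simp: cinner_def sum_distrib_left orthonormal_dim intro!: sum.cong\<close>)
  also have "\<dots> = ?c j"
    using o j unfolding orthonormal_def by (simp add: if_distrib[of "\<lambda>x. _ * x"] cong: if_cong)
  finally show ?thesis by simp
qed

lemma orth_proj_mat_fixes:
  assumes u: "u \<in> carrier_vec n" and perp: "\<forall>j<length vs. cinner (vs ! j) u = 0"
  shows "orth_proj_mat n vs *\<^sub>v u = u"
  unfolding orth_proj_mat_mult_vec[OF u] using u perp by (intro eq_vecI) auto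

lemma hermitian_orth_proj_mat: "hermitian (orth_proj_mat n vs)"
  unfolding hermitian_def orth_proj_mat_def by (rule eq_matI) (auto simp: mult.commute)

lemma mtrace_orth_proj_mat:
  assumes o: "orthonormal n vs"
  shows "mtrace (orth_proj_mat n vs) = of_nat n - of_nat (length vs)"
proof -
  have "mtrace (orth_proj_mat n vs) = (\<Sum>a<n. 1 - (\<Sum>i<length vs. vs ! i $ a * cnj (vs ! i $ a)))"
    unfolding mtrace_def orth_proj_mat_def by simp
  also have "\<dots> = of_nat n - (\<Sum>i<length vs. \<Sum>a<n. cnj (vs ! i $ a) * vs ! i $ a)"
    by (subst sum.swap) (simp add: sum_subtractf mult.commute)
  also have "(\<Sum>i<length vs. \<Sum>a<n. cnj (vs ! i $ a) * vs ! i $ a) = (\<Sum>i<length vs. cinner (vs ! i) (vs ! i))"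
    unfolding cinner_def using orthonormal_dim[OF o] by simp
  also have "(\<Sum>i<length vs. cinner (vs ! i) (vs ! i)) = (\<Sum>i<length vs. 1)"
    using o unfolding orthonormal_def by (intro sum.cong) auto
  finally show ?thesis by simp
qed

lemma assoc_mult_mult_mat_vec:
  assumes P: "P \<in> carrier_mat n n" and A: "A \<in> carrier_mat n n" and y: "y \<in> carrier_vec n"
  shows "(P * A * P) *\<^sub>v y = P *\<^sub>v (A *\<^sub>v (P *\<^sub>v y))"
  using assoc_mult_mat_vec[OF mult_carrier_mat[OF P A] P y] assoc_mult_mat_vec[OF P A, of "P *\<^sub>v y"] P y
  by simp

lemma cinner_orth_proj_compression:
  assumes A: "A \<in> carrier_mat n n" and o: "orthonormal n vs" and y: "y \<in> carrier_vec n"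
    and j: "j < length vs"
  shows "cinner (vs ! j) ((orth_proj_mat n vs * A * orth_proj_mat n vs) *\<^sub>v y) = 0"
proof -
  let ?P = "orth_proj_mat n vs"
  have "A *\<^sub>v (?P *\<^sub>v y) \<in> carrier_vec n" using A y by (meson mult_mat_vec_carrier orth_proj_mat_carrier)
  moreover have "(?P * A * ?P) *\<^sub>v y = ?P *\<^sub>v (A *\<^sub>v (?P *\<^sub>v y))"
    by (rule assoc_mult_mult_mat_vec[OF orth_proj_mat_carrier A y])
  ultimately show ?thesis using cinner_orth_proj_mat[OF _ o j] by simp
qed

text \<open>The orthogonal complement of a list of eigenvectors of a Hermitian matrix is invariant
  under the matrix.\<close>
lemma orth_proj_compression_agrees:
  assumes A: "A \<in> carrier_mat n n" and h: "hermitian A" and o: "orthonormal n vs"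
    and ev: "\<forall>i<length vs. A *\<^sub>v (vs ! i) = lam i \<cdot>\<^sub>v (vs ! i)"
    and u: "u \<in> carrier_vec n" and perp: "\<forall>j<length vs. cinner (vs ! j) u = 0"
  shows "(orth_proj_mat n vs * A * orth_proj_mat n vs) *\<^sub>v u = A *\<^sub>v u"
proof -
  let ?P = "orth_proj_mat n vs"
  have "cinner (vs ! j) (A *\<^sub>v u) = 0" if j: "j < length vs" for j
  proof -
    have "cinner (vs ! j) (A *\<^sub>v u) = cinner (lam j \<cdot>\<^sub>v vs ! j) u"
      using cinner_mult_mat_vec[OF A orthonormal_carrier[OF o j] u] h ev j
      unfolding hermitian_def by simp
    then show ?thesis using cinner_smult_left[OF orthonormal_carrier[OF o j] u] perp j by simp
  qed
  then have "?P *\<^sub>v (A *\<^sub>v u) = A *\<^sub>v u" using A u by (intro orth_proj_mat_fixes) auto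
  moreover have "(?P * A * ?P) *\<^sub>v u = ?P *\<^sub>v (A *\<^sub>v (?P *\<^sub>v u))"
    by (rule assoc_mult_mult_mat_vec[OF orth_proj_mat_carrier A u])
  ultimately show ?thesis using orth_proj_mat_fixes[OF u perp] by simp
qed

text \<open>The compression \<open>Z = P A P\<close> is Hermitian; an eigenvector of \<open>Z\<close> for a nonzero eigenvalue
  lies in the range of \<open>P\<close>, and if \<open>Z = 0\<close>, any nonzero column of \<open>P\<close> is an eigenvector of
  \<open>A\<close> for \<open>0\<close>.\<close>
lemma hermitian_orthogonal_eigenvector:
  assumes A: "A \<in> carrier_mat n n" and h: "hermitian A" and o: "orthonormal n vs"
    and k: "length vs < n" and ev: "\<forall>i<length vs. A *\<^sub>v (vs ! i) = lam i \<cdot>\<^sub>v (vs ! i)"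
  obtains u \<mu> where "u \<in> carrier_vec n" "u \<noteq> 0\<^sub>v n" "\<forall>j<length vs. cinner (vs ! j) u = 0"
    "A *\<^sub>v u = \<mu> \<cdot>\<^sub>v u"
proof -
  define P where "P = orth_proj_mat n vs"
  define Z where "Z = P * A * P"
  have P: "P \<in> carrier_mat n n" unfolding P_def by simp
  have Z: "Z \<in> carrier_mat n n" unfolding Z_def using P A by simp
  note Z_orth = cinner_orth_proj_compression[OF A o, folded P_def, folded Z_def]
  note Z_agrees = orth_proj_compression_agrees[OF A h o ev, folded P_def, folded Z_def]
  show thesis
  proof (cases "Z = 0\<^sub>m n n")
    case False
    have "hermitian Z"
      unfolding Z_def P_def by (rule hermitian_mult_mult[OF A _ h hermitian_orth_proj_mat]) simp
    with hermitian_nonzero_eigenvalue[OF Z _ False] obtain \<mu> where "\<mu> \<noteq> 0" "eigenvalue Z \<mu>"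
      by blast
    then obtain u where u: "u \<in> carrier_vec n" "u \<noteq> 0\<^sub>v n" and Zu: "Z *\<^sub>v u = \<mu> \<cdot>\<^sub>v u"
      unfolding eigenvalue_def eigenvector_def using Z by auto
    have perp: "\<forall>j<length vs. cinner (vs ! j) u = 0"
      using Z_orth[OF u(1)] \<open>\<mu> \<noteq> 0\<close> by (simp add: Zu cinner_smult_right)
    have "A *\<^sub>v u = \<mu> \<cdot>\<^sub>v u" using Z_agrees[OF u(1) perp] Zu by simp
    then show thesis by (rule that[OF u perp])
  next
    case True
    have "mtrace P \<noteq> 0" unfolding P_def using mtrace_orth_proj_mat[OF o] k by simp
    then obtain a where a: "a < n" and Paa: "P $$ (a, a) \<noteq> 0"
      unfolding mtrace_def using P by (metis (no_types, lifting) carrier_matD(1) lessThan_iff sum.neutral)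
    define u where "u = P *\<^sub>v unit_vec n a"
    have u: "u \<in> carrier_vec n" unfolding u_def using P by simp
    have "u $ a = P $$ (a, a)" unfolding u_def using P a by simp
    then have u0: "u \<noteq> 0\<^sub>v n" using Paa a by auto
    have perp: "\<forall>j<length vs. cinner (vs ! j) u = 0"
      unfolding u_def P_def using cinner_orth_proj_mat[OF _ o] by simp
    have "A *\<^sub>v u = Z *\<^sub>v u" using Z_agrees[OF u perp] by simp
    also have "\<dots> = 0 \<cdot>\<^sub>v u" using True u by (auto intro!: eq_vecI)
    finally show thesis by (rule that[OF u u0 perp])
  qed
qed

lemma hermitian_orthonormal_eigenvectors:
  assumes A: "A \<in> carrier_mat n n" and h: "hermitian A" and k: "k \<le> n"
  shows "\<exists>vs lam. length vs = k \<and> orthonormal n vs \<and> (\<forall>i<k. A *\<^sub>v (vs ! i) = lam i \<cdot>\<^sub>v (vs ! i))"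
  using k
proof (induction k)
  case 0
  then show ?case by (auto simp: orthonormal_def)
next
  case (Suc k)
  then obtain vs lam where len: "length vs = k" and o: "orthonormal n vs"
    and ev: "\<forall>i<k. A *\<^sub>v (vs ! i) = lam i \<cdot>\<^sub>v (vs ! i)" by auto
  obtain u \<mu> where u: "u \<in> carrier_vec n" "u \<noteq> 0\<^sub>v n" and perp: "\<forall>j<k. cinner (vs ! j) u = 0"
    and Au: "A *\<^sub>v u = \<mu> \<cdot>\<^sub>v u"
    using hermitian_orthogonal_eigenvector[OF A h o, of lam] len ev Suc.prems by auto
  define w where "w = complex_of_real (1 / cnorm u) \<cdot>\<^sub>v u"
  have w: "w \<in> carrier_vec n" using u unfolding w_def by simp
  have "\<forall>j<k. cinner (vs ! j) w = 0" unfolding w_def using perp by (simp add: cinner_smult_right)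
  then have o': "orthonormal n (vs @ [w])"
    using orthonormal_snoc[OF o w] cinner_normalize[OF u] len unfolding w_def by simp
  have "A *\<^sub>v w = \<mu> \<cdot>\<^sub>v w"
    unfolding w_def using Au A u by (simp add: mult_mat_vec smult_smult_assoc mult.commute)
  then have "\<forall>i<Suc k. A *\<^sub>v ((vs @ [w]) ! i) = (lam(k := \<mu>)) i \<cdot>\<^sub>v ((vs @ [w]) ! i)"
    using ev len by (auto simp: nth_append less_Suc_eq)
  then show ?case using o' len by (intro exI[of _ "vs @ [w]"] exI[of _ "lam(k := \<mu>)"]) auto
qed

lemma unitary_mat_of_cols:
  assumes o: "orthonormal n vs" and len: "length vs = n"
  shows "unitary n (mat_of_cols n vs)"
proof -
  define V where "V = mat_of_cols n vs"
  have V: "V \<in> carrier_mat n n" unfolding V_def using len by (metis mat_of_cols_carrier(1))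
  have VV: "mat_adjoint V * V = 1\<^sub>m n"
  proof (rule eq_matI)
    fix i j assume "i < dim_row (1\<^sub>m n :: complex mat)" "j < dim_col (1\<^sub>m n :: complex mat)"
    then have i: "i < n" and j: "j < n" by auto
    have "(mat_adjoint V * V) $$ (i, j) = cinner (vs ! i) (vs ! j)"
      using V i j len orthonormal_dim[OF o]
      by (simp add: cinner_def scalar_prod_sum_lessThan V_def mat_of_cols_index)
    also have "\<dots> = 1\<^sub>m n $$ (i, j)" using o i j len unfolding orthonormal_def by auto
    finally show "(mat_adjoint V * V) $$ (i, j) = 1\<^sub>m n $$ (i, j)" .
  qed (use V in auto)
  moreover have "V * mat_adjoint V = 1\<^sub>m n"
    using mat_mult_left_right_inverse[of "mat_adjoint V" n V] VV V by simp
  ultimately show ?thesis using V unfolding unitary_def V_def by simp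
qed

theorem hermitian_spectral:
  assumes A: "A \<in> carrier_mat n n" and h: "hermitian A"
  obtains V lam where "unitary n V" "A * V = V * mat_diag n lam"
proof -
  obtain vs lam where len: "length vs = n" and o: "orthonormal n vs"
    and ev: "\<forall>i<n. A *\<^sub>v (vs ! i) = lam i \<cdot>\<^sub>v (vs ! i)"
    using hermitian_orthonormal_eigenvectors[OF A h le_refl] by auto
  define V where "V = mat_of_cols n vs"
  have V: "V \<in> carrier_mat n n" unfolding V_def using len by (metis mat_of_cols_carrier(1))
  have "A * V = V * mat_diag n lam"
  proof (rule eq_matI)
    fix i j assume "i < dim_row (V * mat_diag n lam)" "j < dim_col (V * mat_diag n lam)"
    then have i: "i < n" and j: "j < n" using V by (auto simp: mat_diag_def)
    have "(A * V) $$ (i, j) = (A *\<^sub>v vs ! j) $ i"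
      using A V i j len orthonormal_carrier[OF o] by (simp add: V_def)
    also have "\<dots> = V $$ (i, j) * lam j"
      using ev i j len orthonormal_dim[OF o] by (simp add: V_def mat_of_cols_index mult.commute)
    finally show "(A * V) $$ (i, j) = (V * mat_diag n lam) $$ (i, j)"
      using mat_diag_mult_right[OF V] i j by simp
  qed (use V A in \<open>auto simp: mat_diag_def\<close>)
  with unitary_mat_of_cols[OF o len] show thesis using that unfolding V_def by blast
qed

section \<open>Unitary changes of basis\<close>

lemma unitary_col_carrier: "unitary n V \<Longrightarrow> col V i \<in> carrier_vec n"
  unfolding unitary_def carrier_vec_def by auto

lemma unitary_cinner_col:
  assumes V: "unitary n V" and i: "i < n" and j: "j < n"
  shows "cinner (col V i) (col V j) = (if i = j then 1 else 0)"
proof -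
  have Vc: "V \<in> carrier_mat n n" and VV: "mat_adjoint V * V = 1\<^sub>m n"
    using V unfolding unitary_def by auto
  have "cinner (col V i) (col V j) = (mat_adjoint V * V) $$ (i, j)"
    using Vc i j by (simp add: cinner_def scalar_prod_sum_lessThan)
  then show ?thesis unfolding VV using i j by simp
qed

lemma unitary_cnorm_col:
  assumes V: "unitary n V" and i: "i < n"
  shows "cnorm (col V i) = 1"
proof -
  have "cnorm (col V i) ^ 2 = 1"
    using unitary_cinner_col[OF V i i] cinner_self[of "col V i"] by (metis of_real_eq_1_iff)
  then show ?thesis using cnorm_nonneg[of "col V i"] by (auto simp: power2_eq_1_iff)
qed

lemma unitary_quadratic_form:
  assumes V: "unitary n V" and A: "A \<in> carrier_mat n n" and AV: "A * V = V * mat_diag n lam"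
    and u: "u \<in> carrier_vec n"
  shows "cinner u (A *\<^sub>v u) = (\<Sum>i<n. lam i * complex_of_real (cmod (cinner (col V i) u) ^ 2))"
proof -
  define y where "y = mat_adjoint V *\<^sub>v u"
  have Vc: "V \<in> carrier_mat n n" and VV: "V * mat_adjoint V = 1\<^sub>m n" using V unfolding unitary_def by auto
  have y: "y \<in> carrier_vec n" unfolding y_def carrier_vec_def using Vc by simp
  have y_coord: "y $ i = cinner (col V i) u" if "i < n" for i
    unfolding y_def cinner_def using Vc u that by (simp add: scalar_prod_sum_lessThan)
  have "u = V *\<^sub>v y"
    unfolding y_def using assoc_mult_mat_vec[of V n n "mat_adjoint V" n u] Vc u VV by simp
  then have "A *\<^sub>v u = (A * V) *\<^sub>v y" using assoc_mult_mat_vec[OF A Vc y] by simp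
  also have "\<dots> = V *\<^sub>v (mat_diag n lam *\<^sub>v y)" unfolding AV by (rule assoc_mult_mat_vec[OF Vc mat_diag_dim y])
  finally have "A *\<^sub>v u = V *\<^sub>v (mat_diag n lam *\<^sub>v y)" .
  moreover have "mat_diag n lam *\<^sub>v y \<in> carrier_vec n" using y by (meson mat_diag_dim mult_mat_vec_carrier)
  ultimately have "cinner u (A *\<^sub>v u) = cinner y (mat_diag n lam *\<^sub>v y)"
    using cinner_mult_mat_vec[OF Vc u] unfolding y_def by simp
  also have "\<dots> = (\<Sum>i<n. cnj (y $ i) * (lam i * y $ i))"
    unfolding cinner_def using y
    by (intro sum.cong) (auto simp: mat_diag_def scalar_prod_sum_lessThan if_distrib[of "\<lambda>x. x * _"] cong: if_cong)
  also have "\<dots> = (\<Sum>i<n. lam i * complex_of_real (cmod (cinner (col V i) u) ^ 2))"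
    using y_coord by (intro sum.cong refl) (simp add: of_real_cmod_square mult_ac del: of_real_power)
  finally show ?thesis .
qed

lemma unitary_quadratic_form_col:
  assumes V: "unitary n V" and A: "A \<in> carrier_mat n n" and AV: "A * V = V * mat_diag n lam"
    and i: "i < n"
  shows "cinner (col V i) (A *\<^sub>v col V i) = lam i"
proof -
  have "cinner (col V i) (A *\<^sub>v col V i)
      = (\<Sum>j<n. lam j * complex_of_real (cmod (cinner (col V j) (col V i)) ^ 2))"
    using unitary_quadratic_form[OF V A AV unitary_col_carrier[OF V]] .
  also have "\<dots> = (\<Sum>j<n. if j = i then lam j else 0)"
    using unitary_cinner_col[OF V _ i] by (intro sum.cong refl) auto
  finally show ?thesis using i by simp
qed

lemma unitary_parseval:
  assumes V: "unitary n V" and u: "u \<in> carrier_vec n"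
  shows "cnorm u ^ 2 = (\<Sum>i<n. cmod (cinner (col V i) u) ^ 2)"
proof -
  have "V \<in> carrier_mat n n" using V unfolding unitary_def by simp
  then have "1\<^sub>m n * V = V * mat_diag n (\<lambda>_. 1)" by simp
  from unitary_quadratic_form[OF V _ this u] u
  have "cinner u u = complex_of_real (\<Sum>i<n. cmod (cinner (col V i) u) ^ 2)" by simp
  then show ?thesis unfolding cinner_self of_real_eq_iff .
qed

lemma unitary_mtrace:
  assumes V: "unitary n V" and Z: "Z \<in> carrier_mat n n"
  shows "mtrace Z = (\<Sum>i<n. cinner (col V i) (Z *\<^sub>v col V i))"
proof -
  have Vc: "V \<in> carrier_mat n n" and VV: "V * mat_adjoint V = 1\<^sub>m n" using V unfolding unitary_def by auto
  have "mtrace Z = mtrace ((Z * V) * mat_adjoint V)"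
    using assoc_mult_mat[of Z n n V n "mat_adjoint V" n] Z Vc VV by simp
  also have "\<dots> = mtrace (mat_adjoint V * (Z * V))"
    using mtrace_mult_comm[of "Z * V" n n "mat_adjoint V"] Z Vc by simp
  also have "\<dots> = (\<Sum>i<n. cinner (col V i) (Z *\<^sub>v col V i))"
    unfolding mtrace_def cinner_def using Z Vc by (auto simp: scalar_prod_sum_lessThan intro!: sum.cong)
  finally show ?thesis .
qed

lemma char_poly_unitary_diagonalizable:
  assumes V: "unitary n V" and A: "A \<in> carrier_mat n n" and AV: "A * V = V * mat_diag n lam"
  shows "char_poly A = (\<Prod>a\<leftarrow>map lam [0..<n]. [:- a, 1:])"
proof -
  have Vc: "V \<in> carrier_mat n n" and VV: "mat_adjoint V * V = 1\<^sub>m n" "V * mat_adjoint V = 1\<^sub>m n"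
    using V unfolding unitary_def by auto
  have "A = V * mat_diag n lam * mat_adjoint V"
    using assoc_mult_mat[of A n n V n "mat_adjoint V" n] A Vc VV AV by simp
  then have "similar_mat_wit A (mat_diag n lam) V (mat_adjoint V)"
    using A Vc VV by (intro similar_mat_witI) auto
  then have "similar_mat A (mat_diag n lam)" unfolding similar_mat_def by blast
  have "upper_triangular (mat_diag n lam)" by (simp add: upper_triangular_def mat_diag_def)
  moreover have "diag_mat (mat_diag n lam) = map lam [0..<n]" by (simp add: diag_mat_def mat_diag_def)
  ultimately have "char_poly (mat_diag n lam) = (\<Prod>a\<leftarrow>map lam [0..<n]. [:- a, 1:])"
    using char_poly_upper_triangular[OF mat_diag_dim] by metis
  with char_poly_similar[OF \<open>similar_mat A (mat_diag n lam)\<close>] show ?thesis by simp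
qed

section \<open>Singular values of real matrices\<close>

lemma proots_prod_linear: "proots (\<Prod>a\<leftarrow>xs. [:- a, 1:]) = mset xs"
proof -
  have z: "0 \<notin> set (map (\<lambda>a. [:- a, 1:]) xs)" by auto
  have "sum_list (map proots (map (\<lambda>a. [:- a, 1:]) xs)) = mset xs" by (induction xs) auto
  then show ?thesis using proots_prod_list[OF z] by simp
qed

lemma map_poly_of_real_prod_linear:
  "map_poly complex_of_real (\<Prod>a\<leftarrow>xs. [:- a, 1:]) = (\<Prod>a\<leftarrow>map complex_of_real xs. [:- a, 1:])"
proof -
  interpret mp: map_poly_comm_ring_hom complex_of_real ..
  show ?thesis
  proof (induction xs)
    case (Cons a xs)
    have "map_poly complex_of_real (\<Prod>a\<leftarrow>a # xs. [:- a, 1:]) =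
      map_poly complex_of_real [:- a, 1:] * map_poly complex_of_real (\<Prod>a\<leftarrow>xs. [:- a, 1:])"
      by (simp only: prod_list.Cons list.map mp.hom_mult)
    then show ?case using Cons by simp
  qed simp
qed

lemma map_poly_of_real_inj: "map_poly complex_of_real p = map_poly complex_of_real q \<Longrightarrow> p = q"
  by (metis of_real_hom.coeff_map_poly_hom of_real_eq_iff poly_eqI)

lemma cinner_mult_adjoint_self:
  assumes Y: "Y \<in> carrier_mat n n" and u: "u \<in> carrier_vec n"
  shows "cinner u ((mat_adjoint Y * Y) *\<^sub>v u) = complex_of_real (cnorm (Y *\<^sub>v u) ^ 2)"
proof -
  have Yu: "Y *\<^sub>v u \<in> carrier_vec n" using Y u by (meson mult_mat_vec_carrier)
  have "cinner u ((mat_adjoint Y * Y) *\<^sub>v u) = cinner u (mat_adjoint Y *\<^sub>v (Y *\<^sub>v u))"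
    using Y u by (simp add: assoc_mult_mat_vec[of _ n n _ n])
  also have "\<dots> = cinner (mat_adjoint (mat_adjoint Y) *\<^sub>v u) (Y *\<^sub>v u)"
    by (rule cinner_mult_mat_vec[OF mat_adjoint_carrier[OF Y] u Yu])
  also have "mat_adjoint (mat_adjoint Y) = Y" by (rule eq_matI) auto
  finally show ?thesis by (simp add: cinner_self)
qed

text \<open>The columns of \<open>V\<close> form an orthonormal eigenbasis of \<open>X\<^sup>T X\<close>.\<close>
lemma singular_values_unitary_basis:
  assumes X: "X \<in> carrier_mat n n"
  obtains V where "unitary n V"
    and "singular_values X = mset (map (\<lambda>i. cnorm (cmat X *\<^sub>v col V i)) [0..<n])"
    and "\<And>u. u \<in> carrier_vec n \<Longrightarrow>
      cnorm (cmat X *\<^sub>v u) ^ 2 = (\<Sum>i<n. cnorm (cmat X *\<^sub>v col V i) ^ 2 * cmod (cinner (col V i) u) ^ 2)"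
proof -
  define S where "S = transpose_mat X * X"
  have S: "S \<in> carrier_mat n n" unfolding S_def using X by simp
  have Xc: "cmat X \<in> carrier_mat n n" using X by simp
  have Sc: "cmat S = mat_adjoint (cmat X) * cmat X"
    unfolding S_def mat_adjoint_of_real using of_real_hom.mat_hom_mult[of "transpose_mat X" n n X n] X
    by simp
  have "hermitian (cmat S)"
    unfolding hermitian_def Sc using mat_adjoint_mult[of "mat_adjoint (cmat X)" n n "cmat X" n] Xc
    by (simp add: mat_adjoint_of_real)
  then obtain V lam where V: "unitary n V" and SV: "cmat S * V = V * mat_diag n lam"
    using hermitian_spectral[of "cmat S" n] S by auto
  let ?\<sigma> = "\<lambda>i. cnorm (cmat X *\<^sub>v col V i)"
  have quad: "cinner u (cmat S *\<^sub>v u) = complex_of_real (cnorm (cmat X *\<^sub>v u) ^ 2)"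
    if "u \<in> carrier_vec n" for u
    unfolding Sc by (rule cinner_mult_adjoint_self[OF Xc that])
  have lam: "lam i = complex_of_real (?\<sigma> i ^ 2)" if "i < n" for i
    using unitary_quadratic_form_col[OF V _ SV that] quad[OF unitary_col_carrier[OF V]] S by simp
  have "map_poly complex_of_real (char_poly S) = char_poly (cmat S)"
    by (rule of_real_hom.char_poly_hom[OF S, symmetric])
  also have "\<dots> = (\<Prod>a\<leftarrow>map lam [0..<n]. [:- a, 1:])"
    using char_poly_unitary_diagonalizable[OF V _ SV] S by simp
  also have "map lam [0..<n] = map complex_of_real (map (\<lambda>i. ?\<sigma> i ^ 2) [0..<n])"
    using lam by simp
  finally have cpS: "char_poly S = (\<Prod>a\<leftarrow>map (\<lambda>i. ?\<sigma> i ^ 2) [0..<n]. [:- a, 1:])"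
    unfolding map_poly_of_real_prod_linear[symmetric] by (rule map_poly_of_real_inj)
  have "singular_values X = mset (map ?\<sigma> [0..<n])"
    unfolding singular_values_def S_def[symmetric] cpS proots_prod_linear
    by (simp add: multiset.map_comp o_def cnorm_nonneg)
  moreover have "cnorm (cmat X *\<^sub>v u) ^ 2 = (\<Sum>i<n. ?\<sigma> i ^ 2 * cmod (cinner (col V i) u) ^ 2)"
    if u: "u \<in> carrier_vec n" for u
  proof -
    have "complex_of_real (cnorm (cmat X *\<^sub>v u) ^ 2)
        = (\<Sum>i<n. lam i * complex_of_real (cmod (cinner (col V i) u) ^ 2))"
      using quad[OF u] unitary_quadratic_form[OF V _ SV u] S by simp
    also have "\<dots> = complex_of_real (\<Sum>i<n. ?\<sigma> i ^ 2 * cmod (cinner (col V i) u) ^ 2)"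
      unfolding of_real_sum using lam by (intro sum.cong refl) simp
    finally show ?thesis unfolding of_real_eq_iff .
  qed
  ultimately show thesis using that V by blast
qed

lemma sigma_min_mult_vec_le:
  assumes M: "M \<in> carrier_mat n n" and z: "z \<in> carrier_vec n"
  shows "sigma_min M * cnorm z \<le> cnorm (cmat M *\<^sub>v z)"
proof (cases "n = 0")
  case True
  then show ?thesis using z by (simp add: cnorm_def cnorm_nonneg)
next
  case False
  obtain V where V: "unitary n V"
    and svM: "singular_values M = mset (map (\<lambda>i. cnorm (cmat M *\<^sub>v col V i)) [0..<n])"
    and qf: "\<And>u. u \<in> carrier_vec n \<Longrightarrow> cnorm (cmat M *\<^sub>v u) ^ 2
      = (\<Sum>i<n. cnorm (cmat M *\<^sub>v col V i) ^ 2 * cmod (cinner (col V i) u) ^ 2)"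
    using singular_values_unitary_basis[OF M] by blast
  let ?\<sigma> = "\<lambda>i. cnorm (cmat M *\<^sub>v col V i)"
  let ?s = "sigma_min M"
  have s: "?s = Min (?\<sigma> ` {..<n})" unfolding sigma_min_def svM by (simp add: atLeast0LessThan)
  have s0: "0 \<le> ?s" unfolding s using False by (subst Min_ge_iff) (auto simp: cnorm_nonneg)
  have s_le: "?s \<le> ?\<sigma> i" if "i < n" for i unfolding s using that by simp
  have "(?s * cnorm z) ^ 2 = (\<Sum>i<n. ?s ^ 2 * cmod (cinner (col V i) z) ^ 2)"
    unfolding power_mult_distrib unitary_parseval[OF V z] by (simp add: sum_distrib_left)
  also have "\<dots> \<le> (\<Sum>i<n. ?\<sigma> i ^ 2 * cmod (cinner (col V i) z) ^ 2)"
    using s_le s0 by (intro sum_mono mult_right_mono power_mono) auto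
  also have "\<dots> = cnorm (cmat M *\<^sub>v z) ^ 2" using qf[OF z] by simp
  finally show ?thesis using cnorm_nonneg by (rule power2_le_imp_le)
qed

lemma sigma_min_pos:
  assumes M: "M \<in> carrier_mat n n" and W: "W \<in> carrier_mat n n" and WM: "W * M = 1\<^sub>m n"
    and n: "n > 0"
  shows "sigma_min M > 0"
proof -
  obtain V where V: "unitary n V"
    and svM: "singular_values M = mset (map (\<lambda>i. cnorm (cmat M *\<^sub>v col V i)) [0..<n])"
    using singular_values_unitary_basis[OF M] by blast
  have "cnorm (cmat M *\<^sub>v col V i) > 0" if i: "i < n" for i
  proof -
    let ?v = "col V i"
    have v: "?v \<in> carrier_vec n" using unitary_col_carrier[OF V] .
    have Mv: "cmat M *\<^sub>v ?v \<in> carrier_vec n" using M v by (meson map_carrier_mat mult_mat_vec_carrier)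
    have "?v \<noteq> 0\<^sub>v n" using unitary_cnorm_col[OF V i] cnorm_eq_0_iff[OF v] by auto
    moreover have "cmat W * cmat M = 1\<^sub>m n"
      by (metis WM of_real_hom.mat_hom_mult[OF W M] of_real_hom.mat_hom_one)
    then have "cmat W *\<^sub>v (cmat M *\<^sub>v ?v) = ?v"
      using assoc_mult_mat_vec[of "cmat W" n n "cmat M" n ?v] W M v by simp
    moreover have "cmat W *\<^sub>v 0\<^sub>v n = 0\<^sub>v n" using W by (intro eq_vecI) auto
    ultimately have "cmat M *\<^sub>v ?v \<noteq> 0\<^sub>v n" by metis
    then have "cnorm (cmat M *\<^sub>v ?v) \<noteq> 0" using cnorm_eq_0_iff[OF Mv] by simp
    then show ?thesis using cnorm_nonneg[of "cmat M *\<^sub>v ?v"] by linarith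
  qed
  moreover have "sigma_min M = Min ((\<lambda>i. cnorm (cmat M *\<^sub>v col V i)) ` {..<n})"
    unfolding sigma_min_def svM by (simp add: atLeast0LessThan)
  ultimately show ?thesis using n by (simp only:) (subst Min_gr_iff, auto)
qed

lemma cnorm_mult_inverse_le:
  assumes M: "M \<in> carrier_mat n n" and W: "W \<in> carrier_mat n n" and WM: "W * M = 1\<^sub>m n"
    and n: "n > 0" and y: "y \<in> carrier_vec n"
  shows "cnorm (cmat W *\<^sub>v y) \<le> cnorm y / sigma_min M"
proof -
  have "cmat M * cmat W = 1\<^sub>m n"
    by (metis mat_mult_left_right_inverse[OF W M WM] of_real_hom.mat_hom_mult[OF M W] of_real_hom.mat_hom_one)
  then have "cmat M *\<^sub>v (cmat W *\<^sub>v y) = y"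
    using assoc_mult_mat_vec[of "cmat M" n n "cmat W" n y] M W y by simp
  moreover have "cmat W *\<^sub>v y \<in> carrier_vec n" using W y by (meson map_carrier_mat mult_mat_vec_carrier)
  ultimately have "sigma_min M * cnorm (cmat W *\<^sub>v y) \<le> cnorm y"
    using sigma_min_mult_vec_le[OF M] by metis
  then show ?thesis using sigma_min_pos[OF M W WM n] by (simp add: field_simps)
qed

lemma mtrace_mult_inverse_le:
  assumes X: "X \<in> carrier_mat n n" and M: "M \<in> carrier_mat n n" and W: "W \<in> carrier_mat n n"
    and WM: "W * M = 1\<^sub>m n" and n: "n > 0"
  shows "mtrace (X * W) \<le> nuclear_norm X / sigma_min M"
proof -
  obtain V where V: "unitary n V"
    and svX: "singular_values X = mset (map (\<lambda>i. cnorm (cmat X *\<^sub>v col V i)) [0..<n])"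
    using singular_values_unitary_basis[OF X] by blast
  define s where "s = sigma_min M"
  have term_bound: "cmod (cinner (col V i) (cmat W *\<^sub>v (cmat X *\<^sub>v col V i)))
      \<le> cnorm (cmat X *\<^sub>v col V i) / s" if i: "i < n" for i
  proof -
    let ?v = "col V i"
    have v: "?v \<in> carrier_vec n" using unitary_col_carrier[OF V] .
    have Xv: "cmat X *\<^sub>v ?v \<in> carrier_vec n" using X v by (meson map_carrier_mat mult_mat_vec_carrier)
    have WXv: "cmat W *\<^sub>v (cmat X *\<^sub>v ?v) \<in> carrier_vec n"
      using W Xv by (meson map_carrier_mat mult_mat_vec_carrier)
    have "cmod (cinner ?v (cmat W *\<^sub>v (cmat X *\<^sub>v ?v))) \<le> cnorm (cmat W *\<^sub>v (cmat X *\<^sub>v ?v))"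
      using cinner_cauchy_schwarz[OF v WXv] unitary_cnorm_col[OF V i] by simp
    also have "\<dots> \<le> cnorm (cmat X *\<^sub>v ?v) / s"
      unfolding s_def by (rule cnorm_mult_inverse_le[OF M W WM n Xv])
    finally show ?thesis .
  qed
  have "complex_of_real (mtrace (X * W)) = mtrace (cmat (X * W))"
    by (metis mtrace_of_real mult_carrier_mat X W)
  also have "\<dots> = mtrace (cmat X * cmat W)" unfolding of_real_hom.mat_hom_mult[OF X W] ..
  also have "\<dots> = mtrace (cmat W * cmat X)" by (rule mtrace_mult_comm) (use X W in auto)
  also have "\<dots> = (\<Sum>i<n. cinner (col V i) (cmat W *\<^sub>v (cmat X *\<^sub>v col V i)))"
    using unitary_mtrace[OF V, of "cmat W * cmat X"] X W unitary_col_carrier[OF V]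
    by (simp add: assoc_mult_mat_vec[of _ n n _ n])
  finally have "mtrace (X * W) \<le> (\<Sum>i<n. cmod (cinner (col V i) (cmat W *\<^sub>v (cmat X *\<^sub>v col V i))))"
    by (metis Re_complex_of_real complex_Re_le_cmod norm_sum order_trans)
  also have "\<dots> \<le> (\<Sum>i<n. cnorm (cmat X *\<^sub>v col V i) / s)"
    using term_bound by (intro sum_mono) auto
  also have "\<dots> = nuclear_norm X / s"
    unfolding nuclear_norm_def svX sum_mset_sum_list
    by (simp add: sum_divide_distrib interv_sum_list_conv_sum_set_nat atLeast0LessThan)
  finally show ?thesis unfolding s_def .
qed

section \<open>The Neumann series\<close>

lemma pow_mat_Suc_left:
  fixes X :: "'a :: semiring_1 mat"
  assumes X: "X \<in> carrier_mat n n"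
  shows "X * X ^\<^sub>m k = X ^\<^sub>m Suc k"
proof (induction k)
  case 0
  then show ?case using X by simp
next
  case (Suc k)
  have "X * X ^\<^sub>m Suc k = (X * X ^\<^sub>m k) * X"
    using X by (simp add: assoc_mult_mat[of X n n "X ^\<^sub>m k" n X n])
  also have "\<dots> = X ^\<^sub>m Suc (Suc k)" using Suc by simp
  finally show ?case .
qed

lemma pow_mat_smult:
  fixes X :: "'a :: comm_ring_1 mat"
  assumes X: "X \<in> carrier_mat n n"
  shows "(a \<cdot>\<^sub>m X) ^\<^sub>m k = a ^ k \<cdot>\<^sub>m X ^\<^sub>m k"
proof (induction k)
  case 0
  then show ?case using X by (intro eq_matI) auto
next
  case (Suc k)
  have P: "X ^\<^sub>m k \<in> carrier_mat n n" using X by simp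
  have "(a \<cdot>\<^sub>m X) ^\<^sub>m Suc k = (a ^ k \<cdot>\<^sub>m X ^\<^sub>m k) * (a \<cdot>\<^sub>m X)" using Suc by simp
  also have "\<dots> = a ^ k \<cdot>\<^sub>m (X ^\<^sub>m k * (a \<cdot>\<^sub>m X))"
    using mult_smult_assoc_mat[OF P, of "a \<cdot>\<^sub>m X" n] X by simp
  also have "\<dots> = a ^ k \<cdot>\<^sub>m (a \<cdot>\<^sub>m (X ^\<^sub>m k * X))" using mult_smult_distrib[OF P X] by simp
  also have "\<dots> = a ^ Suc k \<cdot>\<^sub>m X ^\<^sub>m Suc k" by (intro eq_matI) (auto simp: mult_ac)
  finally show ?case .
qed

lemma pow_mat_mult_2:
  fixes B :: "'a :: semiring_1 mat"
  assumes B: "B \<in> carrier_mat n n"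
  shows "B ^\<^sub>m (2 * k) = (B ^\<^sub>m 2) ^\<^sub>m k"
proof (induction k)
  case 0
  then show ?case using B by simp
next
  case (Suc k)
  have P: "B ^\<^sub>m (2 * k) \<in> carrier_mat n n" using B by simp
  have "B ^\<^sub>m (2 * Suc k) = B ^\<^sub>m (2 * k) * B * B" by (simp add: numeral_2_eq_2)
  also have "\<dots> = B ^\<^sub>m (2 * k) * (B * B)" using assoc_mult_mat[OF P B B] .
  also have "B * B = B ^\<^sub>m 2" using B by (simp add: numeral_2_eq_2)
  finally show ?case using Suc by simp
qed

lemma spectral_radius_nonneg:
  assumes "Z \<in> carrier_mat n n" "n > 0"
  shows "spectral_radius Z \<ge> 0"
  using spectral_radius_mem_max(1)[OF assms] by auto

lemma spectral_radius_smult_le: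
  assumes Z: "Z \<in> carrier_mat n n" and n: "n > 0" and r: "r > 0"
  shows "spectral_radius (complex_of_real (1 / r) \<cdot>\<^sub>m Z) \<le> spectral_radius Z / r"
proof -
  let ?Y = "complex_of_real (1 / r) \<cdot>\<^sub>m Z"
  have Y: "?Y \<in> carrier_mat n n" using Z by simp
  obtain \<mu> where mu: "\<mu> \<in> spectrum ?Y" and eq: "spectral_radius ?Y = cmod \<mu>"
    using spectral_radius_mem_max(1)[OF Y n] by auto
  from mu obtain v where v: "v \<in> carrier_vec n" "v \<noteq> 0\<^sub>v n" and Yv: "?Y *\<^sub>v v = \<mu> \<cdot>\<^sub>v v"
    unfolding spectrum_def eigenvalue_def eigenvector_def using Y by auto
  have "Z *\<^sub>v v = complex_of_real r \<cdot>\<^sub>v (?Y *\<^sub>v v)"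
    using Z v r by (auto simp: smult_smult_assoc mult_mat_vec[symmetric] intro!: eq_vecI)
  also have "\<dots> = (complex_of_real r * \<mu>) \<cdot>\<^sub>v v" using Yv by (simp add: smult_smult_assoc)
  finally have "eigenvalue Z (complex_of_real r * \<mu>)"
    unfolding eigenvalue_def eigenvector_def using v Z by auto
  then have "cmod (complex_of_real r * \<mu>) \<le> spectral_radius Z"
    using spectral_radius_mem_max(2)[OF Z n] unfolding spectrum_def by auto
  then show ?thesis using eq r by (simp add: norm_mult field_simps)
qed

lemma pow_mat_entries_bound:
  assumes X: "X \<in> carrier_mat n n" and n: "n > 0" and r: "rspec_radius X < r"
  obtains C where "\<And>k i j. i < n \<Longrightarrow> j < n \<Longrightarrow> \<bar>(X ^\<^sub>m k) $$ (i, j)\<bar> \<le> C * r ^ k"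
proof -
  have Xc: "cmat X \<in> carrier_mat n n" using X by simp
  have r0: "r > 0"
    using spectral_radius_nonneg[OF Xc n] r unfolding rspec_radius_def by simp
  define Y where "Y = complex_of_real (1 / r) \<cdot>\<^sub>m cmat X"
  have Y: "Y \<in> carrier_mat n n" unfolding Y_def using Xc by simp
  have "spectral_radius Y \<le> spectral_radius (cmat X) / r"
    unfolding Y_def using spectral_radius_smult_le[OF Xc n r0] .
  also have "\<dots> < 1" using r r0 unfolding rspec_radius_def by (simp add: field_simps)
  finally obtain C where C: "\<And>k. norm_bound (Y ^\<^sub>m k) C"
    using spectral_radius_jnf_norm_bound_less_1_upper_triangular[OF Y] by auto
  have "\<bar>(X ^\<^sub>m k) $$ (i, j)\<bar> \<le> C * r ^ k" if i: "i < n" and j: "j < n" for k i j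
  proof -
    have "Y ^\<^sub>m k = complex_of_real (1 / r) ^ k \<cdot>\<^sub>m cmat (X ^\<^sub>m k)"
      unfolding Y_def pow_mat_smult[OF Xc] of_real_hom.mat_hom_pow[OF X] ..
    then have "(Y ^\<^sub>m k) $$ (i, j) = (1 / complex_of_real r) ^ k * complex_of_real ((X ^\<^sub>m k) $$ (i, j))"
      using X i j by simp
    moreover have "norm ((Y ^\<^sub>m k) $$ (i, j)) \<le> C" using C[of k] Y i j unfolding norm_bound_def by simp
    ultimately have "(1 / r) ^ k * \<bar>(X ^\<^sub>m k) $$ (i, j)\<bar> \<le> C"
      using r0 by (simp add: norm_mult norm_power norm_divide)
    then show ?thesis using r0 by (simp add: field_simps)
  qed
  then show thesis using that by blast
qed

lemma mtrace_mult_pow_div_tendsto_0: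
  assumes X: "X \<in> carrier_mat n n" and n: "n > 0" and c: "rspec_radius X < c"
    and W: "W \<in> carrier_mat n n"
  shows "(\<lambda>k. mtrace (W * X ^\<^sub>m k) / c ^ k) \<longlonglongrightarrow> 0"
proof -
  have "rspec_radius X \<ge> 0"
    unfolding rspec_radius_def using spectral_radius_nonneg[of "cmat X" n] X n by simp
  define r where "r = (rspec_radius X + c) / 2"
  have r: "rspec_radius X < r" "r < c" "0 < r"
    using c \<open>rspec_radius X \<ge> 0\<close> unfolding r_def by auto
  obtain C where C: "\<And>k i j. i < n \<Longrightarrow> j < n \<Longrightarrow> \<bar>(X ^\<^sub>m k) $$ (i, j)\<bar> \<le> C * r ^ k"
    using pow_mat_entries_bound[OF X n r(1)] by blast
  define K where "K = (\<Sum>i<n. \<Sum>j<n. \<bar>W $$ (i, j)\<bar>) * C"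
  have bound: "norm (mtrace (W * X ^\<^sub>m k) / c ^ k) \<le> K * (r / c) ^ k" for k
  proof -
    have "\<bar>mtrace (W * X ^\<^sub>m k)\<bar> = \<bar>\<Sum>i<n. \<Sum>j<n. W $$ (i, j) * (X ^\<^sub>m k) $$ (j, i)\<bar>"
      unfolding mtrace_def using W X by (simp add: scalar_prod_sum_lessThan)
    also have "\<dots> \<le> (\<Sum>i<n. \<Sum>j<n. \<bar>W $$ (i, j)\<bar> * \<bar>(X ^\<^sub>m k) $$ (j, i)\<bar>)"
      by (rule order_trans[OF sum_abs sum_mono]) (auto intro!: order_trans[OF sum_abs] simp: abs_mult)
    also have "\<dots> \<le> (\<Sum>i<n. \<Sum>j<n. \<bar>W $$ (i, j)\<bar> * (C * r ^ k))"
      using C by (intro sum_mono mult_left_mono) auto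
    also have "\<dots> = K * r ^ k" unfolding K_def by (simp add: sum_distrib_right mult.assoc)
    finally show ?thesis using r by (simp add: power_divide abs_divide divide_right_mono)
  qed
  have "(\<lambda>k. K * (r / c) ^ k) \<longlonglongrightarrow> 0"
    using r by (intro tendsto_mult_right_zero LIMSEQ_power_zero) auto
  then show ?thesis
  proof (rule tendsto_0_le[of _ _ _ 1])
    show "\<forall>\<^sub>F k in sequentially. norm (mtrace (W * X ^\<^sub>m k) / c ^ k) \<le> norm (K * (r / c) ^ k) * 1"
      by (rule always_eventually) (use bound in \<open>auto intro: order_trans[OF _ abs_ge_self]\<close>)
  qed
qed

lemma mtrace_pow_telescope:
  fixes X W :: "'a :: field mat"
  assumes X: "X \<in> carrier_mat n n" and W: "W \<in> carrier_mat n n"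
    and WM: "W * (c \<cdot>\<^sub>m 1\<^sub>m n - X) = 1\<^sub>m n" and c: "c \<noteq> 0"
  shows "mtrace (X ^\<^sub>m Suc k) / c ^ Suc k
    = mtrace (W * X ^\<^sub>m Suc k) / c ^ k - mtrace (W * X ^\<^sub>m Suc (Suc k)) / c ^ Suc k"
proof -
  define P Q where "P = X ^\<^sub>m Suc k" and "Q = X ^\<^sub>m Suc (Suc k)"
  have P: "P \<in> carrier_mat n n" and Q: "Q \<in> carrier_mat n n"
    unfolding P_def Q_def by (rule pow_carrier_mat[OF X])+
  have I: "c \<cdot>\<^sub>m 1\<^sub>m n \<in> carrier_mat n n" by simp
  have "(c \<cdot>\<^sub>m 1\<^sub>m n - X) * P = (c \<cdot>\<^sub>m 1\<^sub>m n) * P - X * P" by (rule minus_mult_distrib_mat[OF I X P])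
  also have "(c \<cdot>\<^sub>m 1\<^sub>m n) * P = c \<cdot>\<^sub>m P" using mult_smult_assoc_mat[of "1\<^sub>m n" n n P n c] P by simp
  also have "X * P = Q" unfolding P_def Q_def by (rule pow_mat_Suc_left[OF X])
  finally have MP: "(c \<cdot>\<^sub>m 1\<^sub>m n - X) * P = c \<cdot>\<^sub>m P - Q" .
  have "P = (W * (c \<cdot>\<^sub>m 1\<^sub>m n - X)) * P" using WM P by simp
  also have "\<dots> = W * ((c \<cdot>\<^sub>m 1\<^sub>m n - X) * P)" using W X P by (intro assoc_mult_mat) auto
  also have "\<dots> = W * (c \<cdot>\<^sub>m P) - W * Q" unfolding MP by (rule mult_minus_distrib_mat[OF W _ Q]) (use P in auto)
  also have "\<dots> = c \<cdot>\<^sub>m (W * P) - W * Q" unfolding mult_smult_distrib[OF W P] ..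
  finally have "mtrace P = c * mtrace (W * P) - mtrace (W * Q)"
    using mtrace_minus[of "c \<cdot>\<^sub>m (W * P)" n "W * Q"] mtrace_smult[of "W * P" n c] W P Q by simp
  then show ?thesis unfolding P_def Q_def using c by (simp add: field_simps)
qed

lemma mtrace_pow_sums:
  assumes X: "X \<in> carrier_mat n n" and n: "n > 0" and c: "rspec_radius X < c"
    and W: "W \<in> carrier_mat n n" and WM: "W * (c \<cdot>\<^sub>m 1\<^sub>m n - X) = 1\<^sub>m n"
  shows "(\<lambda>k. mtrace (X ^\<^sub>m Suc k) / c ^ Suc k) sums mtrace (W * X)"
proof -
  have "c > 0"
    using c spectral_radius_nonneg[of "cmat X" n] X n unfolding rspec_radius_def by simp
  define a where "a k = mtrace (W * X ^\<^sub>m Suc k) / c ^ k" for k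
  have "(\<lambda>k. mtrace (W * X ^\<^sub>m Suc k) / c ^ Suc k) \<longlonglongrightarrow> 0"
    using mtrace_mult_pow_div_tendsto_0[OF X n c W] by (rule LIMSEQ_Suc)
  then have "(\<lambda>k. c * (mtrace (W * X ^\<^sub>m Suc k) / c ^ Suc k)) \<longlonglongrightarrow> c * 0"
    by (rule tendsto_mult[OF tendsto_const])
  moreover have "(\<lambda>k. c * (mtrace (W * X ^\<^sub>m Suc k) / c ^ Suc k)) = a"
    using \<open>c > 0\<close> by (auto simp: a_def fun_eq_iff)
  ultimately have "a \<longlonglongrightarrow> 0" by simp
  have step: "mtrace (X ^\<^sub>m Suc k) / c ^ Suc k = a k - a (Suc k)" for k
    unfolding a_def using mtrace_pow_telescope[OF X W WM] \<open>c > 0\<close> by simp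
  have "(\<Sum>k<N. mtrace (X ^\<^sub>m Suc k) / c ^ Suc k) = a 0 - a N" for N
    unfolding step by (rule sum_lessThan_telescope')
  moreover have "(\<lambda>N. a 0 - a N) \<longlonglongrightarrow> a 0"
    using tendsto_diff[OF tendsto_const \<open>a \<longlonglongrightarrow> 0\<close>] by simp
  ultimately have "(\<lambda>k. mtrace (X ^\<^sub>m Suc k) / c ^ Suc k) sums a 0" unfolding sums_def by simp
  moreover have "a 0 = mtrace (W * X)" unfolding a_def using X by simp
  ultimately show ?thesis by simp
qed

lemma det_shift_nonzero:
  assumes X: "X \<in> carrier_mat n n" and c: "rspec_radius X < c"
  shows "det (c \<cdot>\<^sub>m 1\<^sub>m n - X) \<noteq> 0"
proof
  assume det0: "det (c \<cdot>\<^sub>m 1\<^sub>m n - X) = 0"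
  have "char_matrix X c = (-1) \<cdot>\<^sub>m (c \<cdot>\<^sub>m 1\<^sub>m n - X)"
    using X by (intro eq_matI) (auto simp: char_matrix_def)
  then have ev: "eigenvalue X c" using eigenvalue_det[OF X] det0 by (simp add: det_smult)
  then have "eigenvalue (cmat X) (complex_of_real c)" by (rule of_real_hom.eigenvalue_hom[OF X])
  then have "cmod (complex_of_real c) \<in> cmod ` spectrum (cmat X)" unfolding spectrum_def by blast
  then have "cmod (complex_of_real c) \<le> spectral_radius (cmat X)"
    using X eigenvalue_imp_nonzero_dim[OF X ev] by (intro spectral_radius_mem_max(2)) auto
  then show False using c unfolding rspec_radius_def by simp
qed

lemma minv_inverse:
  assumes M: "M \<in> carrier_mat n n" and det: "det M \<noteq> 0"
  shows "M * minv M = 1\<^sub>m n" "minv M * M = 1\<^sub>m n" "minv M \<in> carrier_mat n n"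
proof -
  obtain W where W: "mat_inverse M = Some W"
    using mat_inverse(1)[OF M, where b = "()"] det_non_zero_imp_unit[OF M det, where b = "()"]
    by (cases "mat_inverse M") auto
  then have "minv M = W" unfolding minv_def by simp
  with mat_inverse(2)[OF M W] show "M * minv M = 1\<^sub>m n" "minv M * M = 1\<^sub>m n" "minv M \<in> carrier_mat n n"
    by auto
qed

theorem theorem1:
  fixes B :: "real mat" and n :: nat
  assumes "n \<ge> 1"
    and "B \<in> carrier_mat n n"
    and "\<And>i j. i < n \<Longrightarrow> j < n \<Longrightarrow> B $$ (i, j) \<ge> 0"
    and "\<And>i. i < n \<Longrightarrow> (\<Sum>j<n. B $$ (i, j)) \<le> 1"
  defines "\<zeta> \<equiv> (1 / real n ^ 2) * (\<Sum>i<n. \<Sum>j<n. if B $$ (i, j) > 0 then 1 else 0)"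
  defines "R \<equiv> (\<Sum>k. mtrace ((1 / (\<zeta> ^ Suc k * real n ^ Suc k)) \<cdot>\<^sub>m (B ^\<^sub>m (2 * Suc k))))"
  assumes "\<zeta> * real n > rspec_radius (B ^\<^sub>m 2)"
  shows "summable (\<lambda>k. mtrace ((1 / (\<zeta> ^ Suc k * real n ^ Suc k)) \<cdot>\<^sub>m (B ^\<^sub>m (2 * Suc k))))
     \<and> R = mtrace (B ^\<^sub>m 2 * minv ((\<zeta> * real n) \<cdot>\<^sub>m 1\<^sub>m n - B ^\<^sub>m 2))
     \<and> R \<le> nuclear_norm (B ^\<^sub>m 2) / sigma_min ((\<zeta> * real n) \<cdot>\<^sub>m 1\<^sub>m n - B ^\<^sub>m 2)"
proof -
  define c X where "c = \<zeta> * real n" and "X = B ^\<^sub>m 2"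
  define M W where "M = c \<cdot>\<^sub>m 1\<^sub>m n - X" and "W = minv M"
  have n: "n > 0" using assms(1) by simp
  have X: "X \<in> carrier_mat n n" and M: "M \<in> carrier_mat n n"
    unfolding M_def X_def using assms(2) by auto
  have c: "rspec_radius X < c" unfolding X_def c_def using assms(7) .
  note inv = minv_inverse[OF M det_shift_nonzero[OF X c, folded M_def], folded W_def]
  have "mtrace ((1 / (\<zeta> ^ Suc k * real n ^ Suc k)) \<cdot>\<^sub>m (B ^\<^sub>m (2 * Suc k)))
      = mtrace (X ^\<^sub>m Suc k) / c ^ Suc k" for k
    unfolding c_def X_def pow_mat_mult_2[OF assms(2)] mtrace_smult[OF pow_carrier_mat[OF X[unfolded X_def]]]
    by (simp add: power_mult_distrib)
  moreover have "(\<lambda>k. mtrace (X ^\<^sub>m Suc k) / c ^ Suc k) sums mtrace (X * W)"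
    using mtrace_pow_sums[OF X n c inv(3)] inv(2) mtrace_mult_comm[OF inv(3) X] unfolding M_def by simp
  ultimately have sums: "(\<lambda>k. mtrace ((1 / (\<zeta> ^ Suc k * real n ^ Suc k)) \<cdot>\<^sub>m (B ^\<^sub>m (2 * Suc k))))
      sums mtrace (X * W)" by simp
  moreover have "mtrace (X * W) \<le> nuclear_norm X / sigma_min M"
    using mtrace_mult_inverse_le[OF X M inv(3) inv(2) n] .
  ultimately show ?thesis
    unfolding R_def using sums_summable sums_unique by (fastforce simp: W_def M_def X_def c_def)
qed

end
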